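(* Let $q$ be a prime power, let $\ell \geq 1$ and $n \geq 2\ell+1$ be integers, and put $k = n - \ell$. Let $f$ be a monic irreducible polynomial of degree $\ell$ over $\mathbb{F}_q$ with $\ell \times \ell$ companion matrix $M$, and let $\mathcal{C} = \mathrm{span}_{\mathbb{F}_q}(I, M, M^2, \ldots, M^{\ell-1}) \subseteq \mathbb{F}_q^{\ell \times \ell}$ (the matrix representation of $\mathbb{F}_{q^\ell}$ over $\mathbb{F}_q$), where $I$ is the $\ell \times \ell$ identity matrix. For a matrix $A$ write $[A]_1$ for its first column, and let $\mathbf{0}$ denote the $\ell \times (n-2\ell-1)$ zero matrix (empty if $n = 2\ell+1$). Define \[ \mathcal{G} = \bigl\{ \mathrm{rowspace}\,[\, I \mid A \mid [A^2]_1 \mid \mathbf{0}\,] : A \in \mathcal{C} \bigr\}, \] a family of subspaces of $\mathbb{F}_q^n$, and let $\mathcal{F} = \{ U^\perp : U \in \mathcal{G}\}$, where $U^\perp$ is the orthogonal complement of $U$ with respect to the standard bilinear form on $\mathbb{F}_q^n$. Then $\mathcal{F}$ is a family of $k$-dimensional subspaces of $\mathbb{F}_q^n$ of size $q^\ell = q^{n-k}$, and for every $s \geq 3$, $\mathcal{F}$ is set-like $s$-sunflower-free.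
   Context: A $k$-space means a $k$-dimensional subspace of $\mathbb{F}_q^n$. A family (a set, not a multiset) of $s$ distinct $k$-spaces $S_1, \ldots, S_s$ of $\mathbb{F}_q^n$ is a set-like $s$-sunflower with kernel $K$ if $K = S_i \cap S_j$ for all distinct $i, j$. A family of $k$-spaces is set-like $s$-sunflower-free if no $s$ of its members form a set-like $s$-sunflower. *)

theory Defs
  imports "HOL-Computational_Algebra.Polynomial"
begin

text \<open>Vectors of \<open>F^n\<close> are functions \<open>nat \<Rightarrow> 'a\<close> vanishing outside \<open>{0..<n}\<close>.\<close>
definition vecs :: "nat \<Rightarrow> (nat \<Rightarrow> 'a::zero) set" where
  "vecs n = {v. \<forall>i\<ge>n. v i = 0}"

definition span_list :: "(nat \<Rightarrow> 'a::comm_ring_1) list \<Rightarrow> (nat \<Rightarrow> 'a) set" where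
  "span_list vs = {(\<lambda>j. \<Sum>i<length vs. c i * (vs ! i) j) | c. True}"

definition lin_indep_list :: "(nat \<Rightarrow> 'a::comm_ring_1) list \<Rightarrow> bool" where
  "lin_indep_list vs \<longleftrightarrow>
     (\<forall>c. (\<forall>j. (\<Sum>i<length vs. c i * (vs ! i) j) = 0) \<longrightarrow> (\<forall>i<length vs. c i = 0))"

definition k_space :: "nat \<Rightarrow> nat \<Rightarrow> (nat \<Rightarrow> 'a::field) set \<Rightarrow> bool" where
  "k_space n k S \<longleftrightarrow>
     (\<exists>vs. length vs = k \<and> set vs \<subseteq> vecs n \<and> lin_indep_list vs \<and> S = span_list vs)"

definition perp :: "nat \<Rightarrow> (nat \<Rightarrow> 'a::field) set \<Rightarrow> (nat \<Rightarrow> 'a) set" where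
  "perp n U = {v \<in> vecs n. \<forall>u\<in>U. (\<Sum>j<n. u j * v j) = 0}"

definition mat_id :: "nat \<Rightarrow> nat \<Rightarrow> 'a::{zero,one}" where
  "mat_id i j = (if i = j then 1 else 0)"

definition mat_mult :: "nat \<Rightarrow> (nat \<Rightarrow> nat \<Rightarrow> 'a::comm_ring_1) \<Rightarrow> (nat \<Rightarrow> nat \<Rightarrow> 'a) \<Rightarrow> (nat \<Rightarrow> nat \<Rightarrow> 'a)" where
  "mat_mult l A B = (\<lambda>i j. \<Sum>r<l. A i r * B r j)"

fun mat_pow :: "nat \<Rightarrow> (nat \<Rightarrow> nat \<Rightarrow> 'a::comm_ring_1) \<Rightarrow> nat \<Rightarrow> (nat \<Rightarrow> nat \<Rightarrow> 'a)" where
  "mat_pow l A 0 = mat_id"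
| "mat_pow l A (Suc m) = mat_mult l (mat_pow l A m) A"

definition companion :: "nat \<Rightarrow> 'a::comm_ring_1 poly \<Rightarrow> (nat \<Rightarrow> nat \<Rightarrow> 'a)" where
  "companion l f = (\<lambda>i j. if j = l - 1 then - coeff f i else if i = j + 1 then 1 else 0)"

definition mat_algebra :: "nat \<Rightarrow> (nat \<Rightarrow> nat \<Rightarrow> 'a::comm_ring_1) \<Rightarrow> (nat \<Rightarrow> nat \<Rightarrow> 'a) set" where
  "mat_algebra l M =
     {(\<lambda>i j. if i < l \<and> j < l then (\<Sum>t<l. c t * mat_pow l M t i j) else 0) | c. True}"

text \<open>The \<open>l \<times> n\<close> matrix \<open>[I | A | [A^2]_1 | 0]\<close>, row \<open>i\<close> as a vector of \<open>F^n\<close>.\<close>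
definition gen_row :: "nat \<Rightarrow> nat \<Rightarrow> (nat \<Rightarrow> nat \<Rightarrow> 'a::comm_ring_1) \<Rightarrow> nat \<Rightarrow> (nat \<Rightarrow> 'a)" where
  "gen_row n l A i = (\<lambda>j. if j < l then mat_id i j
                          else if j < 2 * l then A i (j - l)
                          else if j = 2 * l then mat_mult l A A i 0
                          else 0)"

definition rowspace_gen :: "nat \<Rightarrow> nat \<Rightarrow> (nat \<Rightarrow> nat \<Rightarrow> 'a::comm_ring_1) \<Rightarrow> (nat \<Rightarrow> 'a) set" where
  "rowspace_gen n l A = span_list (map (gen_row n l A) [0..<l])"

definition family_G :: "nat \<Rightarrow> nat \<Rightarrow> 'a::comm_ring_1 poly \<Rightarrow> (nat \<Rightarrow> 'a) set set" where
  "family_G n l f = {rowspace_gen n l A | A. A \<in> mat_algebra l (companion l f)}"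

definition family_F :: "nat \<Rightarrow> nat \<Rightarrow> 'a::field poly \<Rightarrow> (nat \<Rightarrow> 'a) set set" where
  "family_F n l f = {perp n U | U. U \<in> family_G n l f}"

definition set_like_sunflower :: "nat \<Rightarrow> 'b set set \<Rightarrow> bool" where
  "set_like_sunflower s Fam \<longleftrightarrow>
     card Fam = s \<and> (\<exists>K. \<forall>S\<in>Fam. \<forall>T\<in>Fam. S \<noteq> T \<longrightarrow> S \<inter> T = K)"

definition set_like_sunflower_free :: "nat \<Rightarrow> 'b set set \<Rightarrow> bool" where
  "set_like_sunflower_free s F \<longleftrightarrow> \<not> (\<exists>Fam \<subseteq> F. set_like_sunflower s Fam)"

end

theory Submission
  imports Defs "HOL-Computational_Algebra.Polynomial_Factorial" "HOL-Library.FuncSet"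
begin

text \<open>
  The companion matrix \<open>M\<close> of \<open>f\<close> acts on coefficient vectors of residues modulo \<open>f\<close> as
  multiplication by \<open>x\<close>, so the member of \<open>\<C>\<close> with first column \<open>c\<close> is multiplication by the
  residue \<open>c(x)\<close> in the field \<open>K = F[x]/(f)\<close>. A vector \<open>(u, w, z, \<dots>)\<close> of \<open>F^n\<close>, with
  \<open>u, w \<in> F^l\<close> read as elements of \<open>K\<close> and \<open>z \<in> F\<close>, is orthogonal to the rows of
  \<open>[I | A | [A^2]_1 | 0]\<close> exactly when \<open>u + c w + c^2 z = 0\<close> in \<open>K\<close>, i.e. when the quadratic
  \<open>u + w Y + z Y^2\<close> vanishes at \<open>c\<close>. For distinct \<open>a, b, c\<close> the quadratic \<open>(Y - a)(Y - b)\<close>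
  vanishes at \<open>a\<close> and \<open>b\<close> but not at \<open>c\<close>, as \<open>K\<close> is a field; so its vector lies in
  \<open>S\<^sub>a \<inter> S\<^sub>b\<close> but not in \<open>S\<^sub>a \<inter> S\<^sub>c\<close>, and no three members of \<open>\<F>\<close> have a common pairwise
  intersection. The other two claims are linear algebra: \<open>[I | B]\<close> has an explicit complement
  basis, and \<open>A\<close> can be read off the orthogonal complement.
\<close>

lemma companion_mult_coeff_mod:
  fixes f :: "'a::field poly"
  assumes deg: "degree f = l" and lc: "lead_coeff f = 1" and l1: "l \<ge> 1" and s: "s < l"
  shows "(\<Sum>r<l. companion l f s r * coeff (q mod f) r) = coeff (pCons 0 q mod f) s"
proof -
  have f0: "f \<noteq> 0" using deg l1 by auto
  define d where "d = q mod f"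
  have "coeff (pCons 0 d) l = coeff d (l - 1)"
    using l1 by (cases l) auto
  moreover have "coeff f l = 1" using lc deg by simp
  ultimately have xq_mod: "pCons 0 q mod f = pCons 0 d - smult (coeff d (l - 1)) f"
    using f0 by (simp add: mod_pCons_eq deg d_def)
  have split: "{..<l} = insert (l - 1) {..<l - 1}" using l1 by auto
  have "(\<Sum>r<l. companion l f s r * coeff d r)
      = - coeff f s * coeff d (l - 1) + (\<Sum>r<l - 1. companion l f s r * coeff d r)"
    by (subst split, subst sum.insert) (auto simp: companion_def)
  also have "(\<Sum>r<l - 1. companion l f s r * coeff d r)
      = (\<Sum>r<l - 1. if r = s - 1 \<and> s \<noteq> 0 then coeff d r else 0)"
    by (rule sum.cong) (auto simp: companion_def)
  also have "\<dots> = (if s \<noteq> 0 then coeff d (s - 1) else 0)"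
    using s by (cases s) (auto simp: sum.delta')
  finally show ?thesis unfolding d_def[symmetric] xq_mod
    by (cases s) (auto simp: algebra_simps)
qed

lemma mat_pow_companion_mult_coeff_mod:
  fixes f :: "'a::field poly"
  assumes deg: "degree f = l" and lc: "lead_coeff f = 1" and l1: "l \<ge> 1" and i: "i < l"
  shows "(\<Sum>r<l. mat_pow l (companion l f) t i r * coeff (q mod f) r)
       = coeff (monom 1 t * q mod f) i"
  using i
proof (induction t arbitrary: q i)
  case 0
  have "(\<Sum>r<l. mat_id i r * coeff (q mod f) r) = (\<Sum>r<l. if i = r then coeff (q mod f) r else 0)"
    by (rule sum.cong) (auto simp: mat_id_def)
  then show ?case using 0 by (simp add: sum.delta)
next
  case (Suc t)
  let ?P = "mat_pow l (companion l f) t"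
  have "(\<Sum>r<l. mat_pow l (companion l f) (Suc t) i r * coeff (q mod f) r)
     = (\<Sum>r<l. \<Sum>s<l. ?P i s * companion l f s r * coeff (q mod f) r)"
    by (simp add: mat_mult_def sum_distrib_right)
  also have "\<dots> = (\<Sum>s<l. ?P i s * (\<Sum>r<l. companion l f s r * coeff (q mod f) r))"
    by (subst sum.swap) (simp add: sum_distrib_left mult.assoc)
  also have "\<dots> = (\<Sum>s<l. ?P i s * coeff (pCons 0 q mod f mod f) s)"
    by (rule sum.cong) (auto simp: companion_mult_coeff_mod[OF deg lc l1])
  also have "\<dots> = coeff (monom 1 t * pCons 0 q mod f) i"
    using Suc.IH[where q = "pCons 0 q", OF Suc.prems] by simp
  also have "monom 1 t * pCons 0 q = monom 1 (Suc t) * q"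
    by (simp add: monom_Suc mult_pCons_right mult_pCons_left)
  finally show ?case .
qed

lemma poly_mod_sum_left:
  fixes f :: "'a::field poly"
  shows "(\<Sum>t\<in>T. g t) mod f = (\<Sum>t\<in>T. g t mod f)"
  by (induction T rule: infinite_finite_induct) (auto simp: poly_mod_add_left)

definition poly_of_fun :: "nat \<Rightarrow> (nat \<Rightarrow> 'a::comm_ring_1) \<Rightarrow> 'a poly" where
  "poly_of_fun l c = (\<Sum>t<l. monom (c t) t)"

definition companion_eval :: "nat \<Rightarrow> 'a::comm_ring_1 poly \<Rightarrow> (nat \<Rightarrow> 'a) \<Rightarrow> nat \<Rightarrow> nat \<Rightarrow> 'a" where
  "companion_eval l f c =
     (\<lambda>i j. if i < l \<and> j < l then (\<Sum>t<l. c t * mat_pow l (companion l f) t i j) else 0)"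

lemma mat_algebra_companion_eq_range: "mat_algebra l (companion l f) = range (companion_eval l f)"
  unfolding mat_algebra_def companion_eval_def by auto

lemma companion_eval_cong: "(\<And>t. t < l \<Longrightarrow> c t = d t) \<Longrightarrow> companion_eval l f c = companion_eval l f d"
  unfolding companion_eval_def by (intro ext) (auto intro!: sum.cong)

lemma coeff_poly_of_fun: "coeff (poly_of_fun l c) i = (if i < l then c i else 0)"
  by (simp add: poly_of_fun_def coeff_sum sum.delta')

lemma poly_of_fun_eq_iff: "poly_of_fun l c = poly_of_fun l d \<longleftrightarrow> (\<forall>t<l. c t = d t)"
  by (metis coeff_poly_of_fun poly_eq_iff)

lemma degree_poly_of_fun_less: "l \<ge> 1 \<Longrightarrow> degree (poly_of_fun l c) < l"
  using degree_le[of "l - 1" "poly_of_fun l c"] by (force simp: coeff_poly_of_fun)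

lemma poly_of_fun_mod:
  fixes f :: "'a::field poly"
  shows "degree f = l \<Longrightarrow> l \<ge> 1 \<Longrightarrow> poly_of_fun l c mod f = poly_of_fun l c"
  by (rule mod_poly_less) (simp add: degree_poly_of_fun_less)

lemma companion_eval_mult_coeff_mod:
  fixes f :: "'a::field poly"
  assumes deg: "degree f = l" and lc: "lead_coeff f = 1" and l1: "l \<ge> 1" and i: "i < l"
  shows "(\<Sum>r<l. companion_eval l f c i r * coeff (q mod f) r) = coeff (poly_of_fun l c * q mod f) i"
proof -
  let ?P = "mat_pow l (companion l f)"
  have "(\<Sum>r<l. companion_eval l f c i r * coeff (q mod f) r)
      = (\<Sum>t<l. c t * (\<Sum>r<l. ?P t i r * coeff (q mod f) r))"
    using i by (simp add: companion_eval_def sum_distrib_right sum_distrib_left mult.assoc)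
      (rule sum.swap)
  also have "\<dots> = (\<Sum>t<l. c t * coeff (monom 1 t * q mod f) i)"
    using mat_pow_companion_mult_coeff_mod[OF deg lc l1 i] by simp
  also have "\<dots> = coeff ((\<Sum>t<l. smult (c t) (monom 1 t * q)) mod f) i"
    by (simp add: coeff_sum mod_smult_left poly_mod_sum_left)
  also have "(\<Sum>t<l. smult (c t) (monom 1 t * q)) = poly_of_fun l c * q"
    by (simp add: poly_of_fun_def sum_distrib_right smult_monom flip: mult_smult_left)
  finally show ?thesis .
qed

lemma companion_eval_first_col:
  fixes f :: "'a::field poly"
  assumes deg: "degree f = l" and lc: "lead_coeff f = 1" and l1: "l \<ge> 1" and i: "i < l"
  shows "companion_eval l f c i 0 = c i"
proof -
  have one_mod: "(1::'a poly) mod f = 1" by (rule mod_poly_less) (use deg l1 in simp)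
  have "(\<Sum>r<l. companion_eval l f c i r * coeff ((1::'a poly) mod f) r) = companion_eval l f c i 0"
    using l1 by (simp add: one_mod coeff_1 if_distrib sum.delta cong: if_cong)
  then show ?thesis
    using companion_eval_mult_coeff_mod[OF deg lc l1 i, of c 1] poly_of_fun_mod[OF deg l1] i
    by (simp add: coeff_poly_of_fun)
qed

lemma companion_eval_mult_poly_of_fun:
  fixes f :: "'a::field poly"
  assumes deg: "degree f = l" and lc: "lead_coeff f = 1" and l1: "l \<ge> 1" and i: "i < l"
  shows "(\<Sum>r<l. companion_eval l f c i r * coeff (poly_of_fun l d) r)
       = coeff (poly_of_fun l c * poly_of_fun l d mod f) i"
  using companion_eval_mult_coeff_mod[OF assms, of c "poly_of_fun l d"] poly_of_fun_mod[OF deg l1]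
  by simp

lemma first_col_mat_mult_companion_eval:
  fixes f :: "'a::field poly"
  assumes deg: "degree f = l" and lc: "lead_coeff f = 1" and l1: "l \<ge> 1" and i: "i < l"
  shows "mat_mult l (companion_eval l f c) (companion_eval l f d) i 0
       = coeff (poly_of_fun l c * poly_of_fun l d mod f) i"
  unfolding mat_mult_def companion_eval_mult_poly_of_fun[OF assms, symmetric]
  by (rule sum.cong) (auto simp: companion_eval_first_col[OF deg lc l1] coeff_poly_of_fun)

lemma nth_mem_span_list: "i < length vs \<Longrightarrow> vs ! i \<in> span_list vs"
  unfolding span_list_def
  by (rule CollectI, rule exI[of _ "\<lambda>k. of_bool (k = i)"]) (simp add: sum_of_bool_mult_eq)

lemma perp_span_list:
  "perp n (span_list vs) = {v \<in> vecs n. \<forall>i<length vs. (\<Sum>j<n. (vs ! i) j * v j) = 0}"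
proof (intro set_eqI iffI)
  fix v assume "v \<in> perp n (span_list vs)"
  then show "v \<in> {v \<in> vecs n. \<forall>i<length vs. (\<Sum>j<n. (vs ! i) j * v j) = 0}"
    using nth_mem_span_list unfolding perp_def by blast
next
  fix v assume v: "v \<in> {v \<in> vecs n. \<forall>i<length vs. (\<Sum>j<n. (vs ! i) j * v j) = 0}"
  have "(\<Sum>j<n. u j * v j) = 0" if u: "u \<in> span_list vs" for u
  proof -
    obtain c where u_def: "u = (\<lambda>j. \<Sum>i<length vs. c i * (vs ! i) j)"
      using u unfolding span_list_def by blast
    have "(\<Sum>j<n. u j * v j) = (\<Sum>i<length vs. c i * (\<Sum>j<n. (vs ! i) j * v j))"
      unfolding u_def sum_distrib_right sum_distrib_left by (subst sum.swap) (simp add: mult.assoc)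
    then show ?thesis using v by simp
  qed
  then show "v \<in> perp n (span_list vs)" using v unfolding perp_def by blast
qed

lemma perp_rowspace_gen:
  "perp n (rowspace_gen n l A) = {v \<in> vecs n. \<forall>i<l. (\<Sum>j<n. gen_row n l A i j * v j) = 0}"
  unfolding rowspace_gen_def perp_span_list by simp

lemma sum_lessThan_split_shift:
  fixes g :: "nat \<Rightarrow> 'a::comm_monoid_add"
  assumes "l \<le> n"
  shows "(\<Sum>j<n. g j) = (\<Sum>j<l. g j) + (\<Sum>m<n - l. g (l + m))"
proof -
  have "(\<Sum>j<n. g j) = (\<Sum>j<l. g j) + (\<Sum>j\<in>{l..<n}. g j)"
    using assms sum.atLeastLessThan_concat[of 0 l n g] by (simp add: atLeast0LessThan)
  also have "(\<Sum>j\<in>{l..<n}. g j) = (\<Sum>m<n - l. g (l + m))"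
    by (rule sum.reindex_bij_witness[of _ "\<lambda>m. l + m" "\<lambda>j. j - l"]) auto
  finally show ?thesis .
qed

lemma gen_row_inner_split:
  assumes i: "i < l" and ln: "l \<le> n"
  shows "(\<Sum>j<n. gen_row n l A i j * v j) = v i + (\<Sum>m<n - l. gen_row n l A i (l + m) * v (l + m))"
proof -
  have "(\<Sum>j<l. gen_row n l A i j * v j) = (\<Sum>j<l. if i = j then v j else 0)"
    by (rule sum.cong) (auto simp: gen_row_def mat_id_def)
  also have "\<dots> = v i" using i by (simp add: sum.delta)
  finally show ?thesis using sum_lessThan_split_shift[OF ln, of "\<lambda>j. gen_row n l A i j * v j"] by simp
qed

lemma gen_row_inner:
  assumes i: "i < l" and n: "2 * l + 1 \<le> n"
  shows "(\<Sum>j<n. gen_row n l A i j * v j)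
       = v i + (\<Sum>r<l. A i r * v (l + r)) + mat_mult l A A i 0 * v (2 * l)"
proof -
  let ?t = "\<lambda>m. gen_row n l A i (l + m) * v (l + m)"
  have "Suc l \<le> n - l" using n by auto
  then have "(\<Sum>m<n - l. ?t m) = (\<Sum>m<Suc l. ?t m) + (\<Sum>m<n - l - Suc l. ?t (Suc l + m))"
    by (rule sum_lessThan_split_shift)
  also have "(\<Sum>m<n - l - Suc l. ?t (Suc l + m)) = 0"
    by (intro sum.neutral) (auto simp: gen_row_def)
  also have "(\<Sum>m<l. ?t m) = (\<Sum>r<l. A i r * v (l + r))"
    by (rule sum.cong) (auto simp: gen_row_def)
  then have "(\<Sum>m<Suc l. ?t m) = (\<Sum>r<l. A i r * v (l + r)) + mat_mult l A A i 0 * v (2 * l)"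
    by (simp add: gen_row_def mult_2)
  finally show ?thesis using gen_row_inner_split[OF i, of n A v] n by (simp add: add.assoc)
qed

lemma span_list_subset_perp:
  assumes "set vs \<subseteq> perp n U"
  shows "span_list vs \<subseteq> perp n U"
proof
  fix v assume "v \<in> span_list vs"
  then obtain c where v_def: "v = (\<lambda>j. \<Sum>i<length vs. c i * (vs ! i) j)"
    unfolding span_list_def by blast
  have vs: "vs ! i \<in> perp n U" if "i < length vs" for i
    using assms that by auto
  then have "v \<in> vecs n" unfolding v_def perp_def vecs_def by (auto intro!: sum.neutral)
  moreover have "(\<Sum>j<n. u j * v j) = 0" if "u \<in> U" for u
  proof -
    have "(\<Sum>j<n. u j * v j) = (\<Sum>i<length vs. c i * (\<Sum>j<n. u j * (vs ! i) j))"
      unfolding v_def sum_distrib_left by (subst sum.swap) (simp add: ac_simps)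
    then show ?thesis using vs \<open>u \<in> U\<close> unfolding perp_def by simp
  qed
  ultimately show "v \<in> perp n U" unfolding perp_def by blast
qed

definition perp_basis_vec :: "nat \<Rightarrow> nat \<Rightarrow> (nat \<Rightarrow> nat \<Rightarrow> 'a::comm_ring_1) \<Rightarrow> nat \<Rightarrow> nat \<Rightarrow> 'a" where
  "perp_basis_vec n l A m =
     (\<lambda>j. if j = l + m then 1 else if j < l then - gen_row n l A j (l + m) else 0)"

lemma perp_basis_vec_mem_vecs: "m < n - l \<Longrightarrow> perp_basis_vec n l A m \<in> vecs n"
  by (auto simp: perp_basis_vec_def vecs_def)

lemma gen_row_inner_perp_basis_vec:
  assumes i: "i < l" and ln: "l \<le> n" and m: "m < n - l"
  shows "(\<Sum>j<n. gen_row n l B i j * perp_basis_vec n l A m j)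
       = gen_row n l B i (l + m) - gen_row n l A i (l + m)"
proof -
  have "(\<Sum>k<n - l. gen_row n l B i (l + k) * perp_basis_vec n l A m (l + k))
      = (\<Sum>k<n - l. if k = m then gen_row n l B i (l + k) else 0)"
    by (rule sum.cong) (auto simp: perp_basis_vec_def)
  also have "\<dots> = gen_row n l B i (l + m)" using m by (simp add: sum.delta')
  finally show ?thesis
    using gen_row_inner_split[OF i ln, of B "perp_basis_vec n l A m"] i by (simp add: perp_basis_vec_def)
qed

lemma perp_basis_vec_mem_perp:
  "l \<le> n \<Longrightarrow> m < n - l \<Longrightarrow> perp_basis_vec n l A m \<in> perp n (rowspace_gen n l A)"
  unfolding perp_rowspace_gen
  using perp_basis_vec_mem_vecs gen_row_inner_perp_basis_vec[of _ l n m A A] by simp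

lemma perp_rowspace_gen_expansion:
  assumes ln: "l \<le> n" and v: "v \<in> perp n (rowspace_gen n l A)"
  shows "v j = (\<Sum>k<n - l. v (l + k) * perp_basis_vec n l A k j)"
proof (cases "j < l")
  case True
  have "v j + (\<Sum>k<n - l. gen_row n l A j (l + k) * v (l + k)) = 0"
    using v gen_row_inner_split[OF True ln, of A v] True unfolding perp_rowspace_gen by simp
  then have "v j = - (\<Sum>k<n - l. gen_row n l A j (l + k) * v (l + k))"
    by (simp add: eq_neg_iff_add_eq_0)
  moreover have "(\<Sum>k<n - l. v (l + k) * perp_basis_vec n l A k j)
      = - (\<Sum>k<n - l. gen_row n l A j (l + k) * v (l + k))"
    using True by (simp add: perp_basis_vec_def sum_negf[symmetric] mult.commute)
  ultimately show ?thesis by simp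
next
  case False
  have "(\<Sum>k<n - l. v (l + k) * perp_basis_vec n l A k j) = (\<Sum>k<n - l. if k = j - l then v (l + k) else 0)"
    using False by (intro sum.cong) (auto simp: perp_basis_vec_def)
  also have "\<dots> = v j" using False v by (auto simp: sum.delta' vecs_def perp_def)
  finally show ?thesis by simp
qed

lemma k_space_perp_rowspace_gen:
  fixes A :: "nat \<Rightarrow> nat \<Rightarrow> 'a::field"
  assumes ln: "l \<le> n"
  shows "k_space n (n - l) (perp n (rowspace_gen n l A))"
  unfolding k_space_def
proof (intro exI conjI)
  let ?vs = "map (perp_basis_vec n l A) [0..<n - l]"
  show "length ?vs = n - l" by simp
  show "set ?vs \<subseteq> vecs n" using perp_basis_vec_mem_vecs by auto
  show "lin_indep_list ?vs"
    unfolding lin_indep_list_def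
  proof (intro allI impI)
    fix c i assume zero: "\<forall>j. (\<Sum>k<length ?vs. c k * (?vs ! k) j) = 0" and i: "i < length ?vs"
    have "(\<Sum>k<length ?vs. c k * (?vs ! k) (l + i)) = (\<Sum>k<n - l. if k = i then c k else 0)"
      by (rule sum.cong) (auto simp: perp_basis_vec_def)
    then show "c i = 0" using zero i by (simp add: sum.delta')
  qed
  show "perp n (rowspace_gen n l A) = span_list ?vs"
  proof
    show "perp n (rowspace_gen n l A) \<subseteq> span_list ?vs"
    proof
      fix v assume v: "v \<in> perp n (rowspace_gen n l A)"
      have "v = (\<lambda>j. \<Sum>k<n - l. v (l + k) * perp_basis_vec n l A k j)"
        using perp_rowspace_gen_expansion[OF ln v] by (rule ext)
      also have "\<dots> = (\<lambda>j. \<Sum>k<length ?vs. v (l + k) * (?vs ! k) j)"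
        by (auto intro!: sum.cong)
      finally show "v \<in> span_list ?vs"
        unfolding span_list_def by (intro CollectI exI[of _ "\<lambda>k. v (l + k)"]) simp
    qed
    show "span_list ?vs \<subseteq> perp n (rowspace_gen n l A)"
      by (rule span_list_subset_perp) (auto intro: perp_basis_vec_mem_perp[OF ln])
  qed
qed

lemma perp_rowspace_gen_eqD:
  assumes n: "2 * l \<le> n" and eq: "perp n (rowspace_gen n l A) = perp n (rowspace_gen n l B)"
    and i: "i < l" and j: "j < l"
  shows "A i j = B i j"
proof -
  have ln: "l \<le> n" and jn: "j < n - l" using n j by auto
  have "perp_basis_vec n l A j \<in> perp n (rowspace_gen n l B)"
    using perp_basis_vec_mem_perp[OF ln jn, of A] eq by simp
  then have "(\<Sum>k<n. gen_row n l B i k * perp_basis_vec n l A j k) = 0"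
    unfolding perp_rowspace_gen using i by blast
  then show ?thesis
    using gen_row_inner_perp_basis_vec[OF i ln jn, of B A] j by (simp add: gen_row_def)
qed

text \<open>The coordinates of \<open>(Y - a)(Y - b) = ab - (a + b) Y + Y\<^sup>2\<close> over \<open>F[x]/(f)\<close>.\<close>

definition quadratic_vec :: "nat \<Rightarrow> 'a::field poly \<Rightarrow> (nat \<Rightarrow> 'a) \<Rightarrow> (nat \<Rightarrow> 'a) \<Rightarrow> nat \<Rightarrow> 'a" where
  "quadratic_vec l f a b =
     (\<lambda>j. if j < l then coeff (poly_of_fun l a * poly_of_fun l b mod f) j
          else if j < 2 * l then - (a (j - l) + b (j - l))
          else if j = 2 * l then 1 else 0)"

lemma gen_row_companion_eval_inner_quadratic_vec:
  fixes f :: "'a::field poly"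
  assumes deg: "degree f = l" and lc: "lead_coeff f = 1" and l1: "l \<ge> 1" and i: "i < l"
    and n: "2 * l + 1 \<le> n"
  shows "(\<Sum>j<n. gen_row n l (companion_eval l f c) i j * quadratic_vec l f a b j)
       = coeff ((poly_of_fun l a - poly_of_fun l c) * (poly_of_fun l b - poly_of_fun l c) mod f) i"
proof -
  let ?C = "companion_eval l f c" and ?P = "poly_of_fun l"
  have "(\<Sum>r<l. ?C i r * quadratic_vec l f a b (l + r))
      = - (\<Sum>r<l. ?C i r * coeff (?P a) r) - (\<Sum>r<l. ?C i r * coeff (?P b) r)"
    by (simp add: quadratic_vec_def coeff_poly_of_fun sum_negf[symmetric]
        sum_subtractf[symmetric] algebra_simps)
  also have "\<dots> = - coeff (?P c * ?P a mod f) i - coeff (?P c * ?P b mod f) i"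
    using companion_eval_mult_poly_of_fun[OF deg lc l1 i] by simp
  finally have "(\<Sum>j<n. gen_row n l ?C i j * quadratic_vec l f a b j)
      = coeff (?P a * ?P b mod f) i - coeff (?P c * ?P a mod f) i - coeff (?P c * ?P b mod f) i
        + coeff (?P c * ?P c mod f) i"
    using gen_row_inner[OF i n, of ?C] first_col_mat_mult_companion_eval[OF deg lc l1 i] i
    by (simp add: quadratic_vec_def)
  also have "\<dots> = coeff ((?P a * ?P b - ?P c * ?P a - ?P c * ?P b + ?P c * ?P c) mod f) i"
    by (simp add: poly_mod_add_left poly_mod_diff_left)
  also have "?P a * ?P b - ?P c * ?P a - ?P c * ?P b + ?P c * ?P c = (?P a - ?P c) * (?P b - ?P c)"
    by (simp add: algebra_simps)
  finally show ?thesis .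
qed

lemma quadratic_vec_mem_perp_iff:
  fixes f :: "'a::field poly"
  assumes deg: "degree f = l" and lc: "lead_coeff f = 1" and l1: "l \<ge> 1" and n: "2 * l + 1 \<le> n"
  shows "quadratic_vec l f a b \<in> perp n (rowspace_gen n l (companion_eval l f c))
     \<longleftrightarrow> f dvd (poly_of_fun l a - poly_of_fun l c) * (poly_of_fun l b - poly_of_fun l c)"
proof -
  define g where "g = (poly_of_fun l a - poly_of_fun l c) * (poly_of_fun l b - poly_of_fun l c) mod f"
  have "f \<noteq> 0" using deg l1 by auto
  have "(\<forall>i<l. coeff g i = 0) \<longleftrightarrow> g = 0"
  proof
    assume coeffs: "\<forall>i<l. coeff g i = 0"
    show "g = 0"
    proof (rule ccontr)
      assume "g \<noteq> 0"
      then have "degree g < l" using degree_mod_less'[OF \<open>f \<noteq> 0\<close>] deg unfolding g_def by simp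
      then show False using coeffs \<open>g \<noteq> 0\<close> leading_coeff_0_iff by blast
    qed
  qed simp
  moreover have "quadratic_vec l f a b \<in> vecs n"
    using n by (auto simp: vecs_def quadratic_vec_def)
  ultimately show ?thesis
    unfolding perp_rowspace_gen dvd_eq_mod_eq_0
    using gen_row_companion_eval_inner_quadratic_vec[OF deg lc l1 _ n] by (simp add: g_def)
qed

lemma irreducible_dvd_mult_degree_less:
  fixes f p q :: "'a::field poly"
  assumes "irreducible f" and "f dvd p * q" and "degree p < degree f" and "degree q < degree f"
  shows "p = 0 \<or> q = 0"
proof -
  have "f dvd p \<or> f dvd q"
    using assms(1,2) field_poly_irreducible_imp_prime prime_elem_dvd_mult_iff by blast
  moreover have "r = 0" if "f dvd r" and "degree r < degree f" for r
    using that dvd_imp_degree_le[of f r] by (cases "r = 0") auto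
  ultimately show ?thesis using assms(3,4) by blast
qed

lemma card_range_eq_card_power:
  fixes g :: "(nat \<Rightarrow> 'a::finite) \<Rightarrow> 'b"
  assumes g_eq_iff: "\<And>c d. g c = g d \<longleftrightarrow> (\<forall>i<l. c i = d i)"
  shows "card (range g) = card (UNIV :: 'a set) ^ l"
proof -
  let ?C = "PiE {..<l} (\<lambda>_. UNIV :: 'a set)"
  have "range g = g ` ?C"
  proof
    show "range g \<subseteq> g ` ?C"
    proof
      fix y assume "y \<in> range g"
      then obtain c where "y = g c" by blast
      moreover have "g c = g (restrict c {..<l})" using g_eq_iff by simp
      moreover have "restrict c {..<l} \<in> ?C" by simp
      ultimately show "y \<in> g ` ?C" by blast
    qed
  qed blast
  moreover have "inj_on g ?C"
  proof
    fix c d assume c: "c \<in> ?C" and d: "d \<in> ?C" and "g c = g d"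
    then have "\<forall>i<l. c i = d i" using g_eq_iff by blast
    then show "c = d" using PiE_ext[OF c d] by blast
  qed
  ultimately have "card (range g) = card ?C" by (simp add: card_image)
  then show ?thesis by (simp add: card_PiE)
qed

lemma set_like_sunflower_free_if_inter_ne:
  assumes inter_ne: "\<And>S T U. \<lbrakk>S \<in> F; T \<in> F; U \<in> F; S \<noteq> T; S \<noteq> U; T \<noteq> U\<rbrakk> \<Longrightarrow> S \<inter> T \<noteq> S \<inter> U"
    and s: "s \<ge> 3"
  shows "set_like_sunflower_free s F"
  unfolding set_like_sunflower_free_def set_like_sunflower_def
proof
  assume "\<exists>Fam\<subseteq>F. card Fam = s \<and> (\<exists>K. \<forall>S\<in>Fam. \<forall>T\<in>Fam. S \<noteq> T \<longrightarrow> S \<inter> T = K)"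
  then obtain Fam K where sub: "Fam \<subseteq> F" and card: "card Fam = s"
    and kernel: "\<forall>S\<in>Fam. \<forall>T\<in>Fam. S \<noteq> T \<longrightarrow> S \<inter> T = K"
    by blast
  obtain Three where "Three \<subseteq> Fam" and "card Three = 3"
    using obtain_subset_with_card_n[of 3 Fam] card s by auto
  then obtain S T U where "S \<in> Fam" "T \<in> Fam" "U \<in> Fam" "S \<noteq> T" "S \<noteq> U" "T \<noteq> U"
    by (auto simp: card_3_iff)
  then show False using inter_ne[of S T U] sub kernel by blast
qed

definition family_F_member :: "nat \<Rightarrow> nat \<Rightarrow> 'a::field poly \<Rightarrow> (nat \<Rightarrow> 'a) \<Rightarrow> (nat \<Rightarrow> 'a) set" where
  "family_F_member n l f c = perp n (rowspace_gen n l (companion_eval l f c))"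

lemma family_F_eq_range: "family_F n l f = range (family_F_member n l f)"
  unfolding family_F_def family_G_def mat_algebra_companion_eq_range family_F_member_def by blast

lemma family_F_member_eq_iff:
  fixes f :: "'a::field poly"
  assumes deg: "degree f = l" and lc: "lead_coeff f = 1" and l1: "l \<ge> 1" and n: "2 * l \<le> n"
  shows "family_F_member n l f c = family_F_member n l f d \<longleftrightarrow> (\<forall>i<l. c i = d i)"
proof
  assume "family_F_member n l f c = family_F_member n l f d"
  then have eq: "perp n (rowspace_gen n l (companion_eval l f c))
      = perp n (rowspace_gen n l (companion_eval l f d))"
    unfolding family_F_member_def .
  show "\<forall>i<l. c i = d i"
  proof (intro allI impI)
    fix i assume i: "i < l"
    have "companion_eval l f c i 0 = companion_eval l f d i 0"
      using l1 by (intro perp_rowspace_gen_eqD[OF n eq i]) simp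
    then show "c i = d i" by (simp add: companion_eval_first_col[OF deg lc l1 i])
  qed
next
  assume "\<forall>i<l. c i = d i"
  then have "companion_eval l f c = companion_eval l f d" by (intro companion_eval_cong) simp
  then show "family_F_member n l f c = family_F_member n l f d"
    unfolding family_F_member_def by simp
qed

lemma family_F_member_inter_ne:
  fixes f :: "'a::field poly"
  assumes deg: "degree f = l" and lc: "lead_coeff f = 1" and l1: "l \<ge> 1" and irr: "irreducible f"
    and n: "2 * l + 1 \<le> n"
    and ac: "family_F_member n l f a \<noteq> family_F_member n l f c"
    and bc: "family_F_member n l f b \<noteq> family_F_member n l f c"
  shows "family_F_member n l f a \<inter> family_F_member n l f b \<noteq> family_F_member n l f a \<inter> family_F_member n l f c"
proof -
  let ?P = "poly_of_fun l" and ?S = "family_F_member n l f" and ?v = "quadratic_vec l f a b"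
  have mem_iff: "?v \<in> ?S x \<longleftrightarrow> f dvd (?P a - ?P x) * (?P b - ?P x)" for x
    unfolding family_F_member_def using quadratic_vec_mem_perp_iff[OF deg lc l1 n] .
  have "?P x - ?P c \<noteq> 0" if "?S x \<noteq> ?S c" for x
    using that family_F_member_eq_iff[OF deg lc l1, of n x c] n poly_of_fun_eq_iff[of l x c] by simp
  moreover have "degree (?P x - ?P c) < degree f" for x
  proof -
    have "max (degree (?P x)) (degree (?P c)) < l" using degree_poly_of_fun_less[OF l1, of x] degree_poly_of_fun_less[OF l1, of c] by simp
    then show ?thesis using degree_diff_le_max[of "?P x" "?P c"] deg by linarith
  qed
  ultimately have "?v \<notin> ?S c"
    using irreducible_dvd_mult_degree_less[OF irr] ac bc mem_iff[of c] by blast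
  moreover have "?v \<in> ?S a" and "?v \<in> ?S b" using mem_iff by simp_all
  ultimately show ?thesis by blast
qed

theorem mainTheorem1:
  fixes f :: "'a::{field,finite} poly" and l n k :: nat
  assumes "l \<ge> 1" and "n \<ge> 2 * l + 1" and "k = n - l"
    and "lead_coeff f = 1" and "degree f = l" and "irreducible f"
  shows "(\<forall>S\<in>family_F n l f. k_space n k S)
       \<and> card (family_F n l f) = card (UNIV :: 'a set) ^ l
       \<and> (\<forall>s\<ge>3. set_like_sunflower_free s (family_F n l f))"
proof (intro conjI allI impI)
  note l1 = assms(1) and n = assms(2) and lc = assms(4) and deg = assms(5) and irr = assms(6)
  show "\<forall>S\<in>family_F n l f. k_space n k S"
    using k_space_perp_rowspace_gen[of l n] n assms(3)
    unfolding family_F_eq_range family_F_member_def by auto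
  show "card (family_F n l f) = card (UNIV :: 'a set) ^ l"
    unfolding family_F_eq_range
    by (rule card_range_eq_card_power) (use family_F_member_eq_iff[OF deg lc l1] n in simp)
  show "set_like_sunflower_free s (family_F n l f)" if "s \<ge> 3" for s
    using that family_F_member_inter_ne[OF deg lc l1 irr n]
    by (intro set_like_sunflower_free_if_inter_ne) (auto simp: family_F_eq_range)
qed

end
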